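(* Consider a single agent with finite action set $A$, $|A|=m\ge 2$, and unknown utility $U:A\to[0,1]$, interacting with a principal over rounds; in each round $t$ the principal chooses a payment $P^t:A\to\mathbb{R}_+$, and the agent plays an action maximizing $U(a)+P^t(a)$, which the principal observes. Consider the principal's algorithm that, for each action $a\in A$, uses $\mathcal{O}(\log(1/\varepsilon))$ iterations of binary search to approximate to precision $\varepsilon$ the smallest value $P^*(a)\in[0,1]$ such that the agent plays $a$ when paid $P^*(a)$ for action $a$ and $0$ for all other actions (one round per binary-search query), and then outputs $\tilde U:=-P^*$. This algorithm $\varepsilon$-learns every such single-agent game using $\mathcal{O}(m\log(1/\varepsilon))$ rounds.
   Context: A principal $\varepsilon$-learns the game if it outputs $\tilde U:A\to\mathbb{R}$ such that there is a constant $W\in\mathbb{R}$ with $|U(a)+W-\tilde U(a)|\le\varepsilon$ for all $a\in A$. The principal initially knows only $A$ and that utilities lie in $[0,1]$. *)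

theory Defs
  imports Complex_Main
begin

definition pay :: "'a \<Rightarrow> real \<Rightarrow> 'a \<Rightarrow> real" where
  "pay a v = (\<lambda>b. if b = a then v else 0)"

text \<open>An agent response rule R t P gives the action played in round t under payment P.
  It is a valid (myopic, utility-maximizing, arbitrary tie-breaking) agent for
  utility U on action set A if it always plays a maximizer of U + P over A.\<close>
definition best_resp :: "'a set \<Rightarrow> ('a \<Rightarrow> real) \<Rightarrow> (nat \<Rightarrow> ('a \<Rightarrow> real) \<Rightarrow> 'a) \<Rightarrow> bool" where
  "best_resp A U R \<longleftrightarrow>
     (\<forall>t P. (\<forall>b. 0 \<le> P b) \<longrightarrow>
        R t P \<in> A \<and> (\<forall>b\<in>A. U b + P b \<le> U (R t P) + P (R t P)))"

definition eps_learns :: "'a set \<Rightarrow> ('a \<Rightarrow> real) \<Rightarrow> ('a \<Rightarrow> real) \<Rightarrow> real \<Rightarrow> bool" where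
  "eps_learns A U Ut \<epsilon> \<longleftrightarrow> (\<exists>W::real. \<forall>a\<in>A. \<bar>U a + W - Ut a\<bar> \<le> \<epsilon>)"

fun bsearch :: "(nat \<Rightarrow> ('a \<Rightarrow> real) \<Rightarrow> 'a) \<Rightarrow> 'a \<Rightarrow> nat \<Rightarrow> nat \<Rightarrow> real \<Rightarrow> real \<Rightarrow> real \<times> nat" where
  "bsearch R a 0 t lo hi = (hi, t)"
| "bsearch R a (Suc k) t lo hi =
     (let mid = (lo + hi) / 2 in
      if R t (pay a mid) = a then bsearch R a k (Suc t) lo mid
      else bsearch R a k (Suc t) mid hi)"

fun learn_list :: "(nat \<Rightarrow> ('a \<Rightarrow> real) \<Rightarrow> 'a) \<Rightarrow> nat \<Rightarrow> 'a list \<Rightarrow> nat \<Rightarrow> ('a \<Rightarrow> real) \<times> nat" where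
  "learn_list R k [] t = ((\<lambda>_. 0), t)"
| "learn_list R k (a # as) t =
     (let (h, t1) = bsearch R a k t 0 1;
          (f, t2) = learn_list R k as t1
      in (f(a := - h), t2))"

definition iters :: "real \<Rightarrow> nat" where
  "iters \<epsilon> = nat \<lceil>log 2 (1 / \<epsilon>)\<rceil>"

definition learn_alg :: "(nat \<Rightarrow> ('a \<Rightarrow> real) \<Rightarrow> 'a) \<Rightarrow> 'a list \<Rightarrow> real \<Rightarrow> ('a \<Rightarrow> real) \<times> nat" where
  "learn_alg R acts \<epsilon> = learn_list R (iters \<epsilon>) acts 0"

end

theory Submission
  imports Defs
begin

text \<open>When only action a is paid, with amount v, a best-responding agent plays a only if v
  covers the utility gap max U - U a, and plays another action only if v does not exceed it.
  Each query of the binary search thus compares its midpoint with the gap, so after k halvings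
  of [0, 1] the upper end lies within 2^-k above the gap. Minus the upper end is then U - max U
  up to 2^-k, and k = ceiling (log 2 (1/\<epsilon>)) rounds per action suffice.\<close>

definition pay_threshold :: "'a set \<Rightarrow> ('a \<Rightarrow> real) \<Rightarrow> 'a \<Rightarrow> real" where
  "pay_threshold A U a = Max (U ` A) - U a"

lemma pay_threshold_bounds:
  assumes "finite A" "a \<in> A" "\<forall>b\<in>A. 0 \<le> U b \<and> U b \<le> 1"
  shows "0 \<le> pay_threshold A U a" "pay_threshold A U a \<le> 1"
proof -
  have "U ` A \<noteq> {}" using assms by blast
  then have "U a \<le> Max (U ` A)" "Max (U ` A) \<le> 1"
    using assms by (auto simp: Max_ge_iff Max_le_iff)
  then show "0 \<le> pay_threshold A U a" "pay_threshold A U a \<le> 1"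
    using assms by (auto simp: pay_threshold_def)
qed

lemma best_resp_pay_threshold:
  assumes br: "best_resp A U R" and "finite A" "a \<in> A" "0 \<le> v"
  shows "R t (pay a v) = a \<Longrightarrow> pay_threshold A U a \<le> v"
    and "R t (pay a v) \<noteq> a \<Longrightarrow> v \<le> pay_threshold A U a"
proof -
  have nonneg: "\<forall>b. 0 \<le> pay a v b" using \<open>0 \<le> v\<close> by (simp add: pay_def)
  have resp: "R t (pay a v) \<in> A"
    and best: "\<And>b. b \<in> A \<Longrightarrow> U b + pay a v b \<le> U (R t (pay a v)) + pay a v (R t (pay a v))"
    using br nonneg unfolding best_resp_def by blast+
  show "pay_threshold A U a \<le> v" if "R t (pay a v) = a"
  proof -
    have "U b \<le> U a + v" if "b \<in> A" for b
      using best[OF that] nonneg \<open>R t (pay a v) = a\<close> by (smt (verit) pay_def)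
    then have "Max (U ` A) \<le> U a + v" using assms by (subst Max_le_iff) auto
    then show ?thesis by (simp add: pay_threshold_def)
  qed
  show "v \<le> pay_threshold A U a" if "R t (pay a v) \<noteq> a"
  proof -
    have "U a + v \<le> U (R t (pay a v))"
      using best[OF \<open>a \<in> A\<close>] that by (simp add: pay_def)
    also have "\<dots> \<le> Max (U ` A)" using resp assms by simp
    finally show ?thesis by (simp add: pay_threshold_def)
  qed
qed

lemma bsearch_rounds: "snd (bsearch R a k t lo hi) = t + k"
  by (induction k arbitrary: t lo hi) (simp_all add: Let_def)

lemma bsearch_brackets:
  fixes \<theta> :: real
  assumes chosen: "\<And>s v. 0 \<le> v \<Longrightarrow> R s (pay a v) = a \<Longrightarrow> \<theta> \<le> v"
    and rejected: "\<And>s v. 0 \<le> v \<Longrightarrow> R s (pay a v) \<noteq> a \<Longrightarrow> v \<le> \<theta>"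
    and "0 \<le> lo" "lo \<le> \<theta>" "\<theta> \<le> hi"
  shows "\<theta> \<le> fst (bsearch R a k t lo hi) \<and> fst (bsearch R a k t lo hi) \<le> \<theta> + (hi - lo) / 2 ^ k"
  using assms(3-)
proof (induction k arbitrary: t lo hi)
  case 0
  then show ?case by simp
next
  case (Suc k)
  define mid where "mid = (lo + hi) / 2"
  have "0 \<le> mid" using Suc.prems by (simp add: mid_def)
  show ?case
  proof (cases "R t (pay a mid) = a")
    case True
    then have "\<theta> \<le> mid" using chosen \<open>0 \<le> mid\<close> by blast
    then have "\<theta> \<le> fst (bsearch R a k (Suc t) lo mid) \<and>
        fst (bsearch R a k (Suc t) lo mid) \<le> \<theta> + (mid - lo) / 2 ^ k"
      using Suc by blast
    moreover have "(mid - lo) / 2 ^ k = (hi - lo) / 2 ^ Suc k" by (simp add: mid_def field_simps)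
    ultimately show ?thesis using True by (simp add: Let_def mid_def[symmetric])
  next
    case False
    then have "mid \<le> \<theta>" using rejected \<open>0 \<le> mid\<close> by blast
    then have "\<theta> \<le> fst (bsearch R a k (Suc t) mid hi) \<and>
        fst (bsearch R a k (Suc t) mid hi) \<le> \<theta> + (hi - mid) / 2 ^ k"
      using Suc \<open>0 \<le> mid\<close> by blast
    moreover have "(hi - mid) / 2 ^ k = (hi - lo) / 2 ^ Suc k" by (simp add: mid_def field_simps)
    ultimately show ?thesis using False by (simp add: Let_def mid_def[symmetric])
  qed
qed

lemma learn_list_rounds: "snd (learn_list R k as t) = t + length as * k"
  by (induction as arbitrary: t) (simp_all add: Let_def case_prod_unfold bsearch_rounds)

lemma learn_list_estimate:
  assumes "\<And>a t. a \<in> set as \<Longrightarrow> \<theta> a \<le> fst (bsearch R a k t 0 1) \<and> fst (bsearch R a k t 0 1) \<le> \<theta> a + \<delta>"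
    and "a \<in> set as"
  shows "\<theta> a \<le> - fst (learn_list R k as t) a \<and> - fst (learn_list R k as t) a \<le> \<theta> a + \<delta>"
  using assms
  by (induction as arbitrary: t) (auto simp: Let_def case_prod_unfold)

lemma iters_bounds:
  assumes "0 < \<epsilon>" "\<epsilon> \<le> 1/2"
  shows "1 / 2 ^ iters \<epsilon> \<le> \<epsilon>" and "real (iters \<epsilon>) \<le> 2 * log 2 (1 / \<epsilon>)"
proof -
  have "2 \<le> 1 / \<epsilon>" using assms by (simp add: field_simps)
  then have log_ge_1: "1 \<le> log 2 (1 / \<epsilon>)" using assms by (simp add: le_log_iff)
  then have iters_eq: "real (iters \<epsilon>) = of_int \<lceil>log 2 (1 / \<epsilon>)\<rceil>" by (simp add: iters_def)
  then have "2 powr log 2 (1 / \<epsilon>) \<le> 2 powr real (iters \<epsilon>)" by simp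
  then have "1 / \<epsilon> \<le> 2 ^ iters \<epsilon>" using assms by (simp add: powr_realpow)
  then show "1 / 2 ^ iters \<epsilon> \<le> \<epsilon>" using assms by (simp add: field_simps)
  show "real (iters \<epsilon>) \<le> 2 * log 2 (1 / \<epsilon>)" using iters_eq log_ge_1 by linarith
qed

theorem theorem4p1:
  "\<exists>C::real. \<forall>(acts :: 'a list) (U :: 'a \<Rightarrow> real) R (\<epsilon>::real).
     distinct acts \<and> length acts \<ge> 2 \<and> (\<forall>a\<in>set acts. 0 \<le> U a \<and> U a \<le> 1) \<and>
     best_resp (set acts) U R \<and> 0 < \<epsilon> \<and> \<epsilon> \<le> 1/2 \<longrightarrow>
       eps_learns (set acts) U (fst (learn_alg R acts \<epsilon>)) \<epsilon> \<and>
       real (snd (learn_alg R acts \<epsilon>)) \<le> C * real (length acts) * log 2 (1 / \<epsilon>)"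
proof (intro exI[of _ 2] allI impI, elim conjE)
  fix acts :: "'a list" and U :: "'a \<Rightarrow> real" and R and \<epsilon> :: real
  assume U01: "\<forall>a\<in>set acts. 0 \<le> U a \<and> U a \<le> 1" and br: "best_resp (set acts) U R"
    and "0 < \<epsilon>" "\<epsilon> \<le> 1/2"
  let ?\<theta> = "pay_threshold (set acts) U" and ?k = "iters \<epsilon>"
  have brackets: "?\<theta> a \<le> fst (bsearch R a ?k t 0 1) \<and> fst (bsearch R a ?k t 0 1) \<le> ?\<theta> a + 1 / 2 ^ ?k"
    if "a \<in> set acts" for a t
  proof -
    have "0 \<le> ?\<theta> a" "?\<theta> a \<le> 1" using pay_threshold_bounds[OF _ that U01] by simp_all
    then show ?thesis
      using bsearch_brackets[of R a "?\<theta> a" 0 1 ?k t] best_resp_pay_threshold[OF br _ that] by simp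
  qed
  have "?\<theta> a \<le> - fst (learn_alg R acts \<epsilon>) a \<and> - fst (learn_alg R acts \<epsilon>) a \<le> ?\<theta> a + 1 / 2 ^ ?k"
    if "a \<in> set acts" for a
    unfolding learn_alg_def using learn_list_estimate[OF brackets that] .
  then have "\<bar>U a - Max (U ` set acts) - fst (learn_alg R acts \<epsilon>) a\<bar> \<le> \<epsilon>" if "a \<in> set acts" for a
    using that iters_bounds(1)[OF \<open>0 < \<epsilon>\<close> \<open>\<epsilon> \<le> 1/2\<close>]
    by (fastforce simp: pay_threshold_def)
  then have "eps_learns (set acts) U (fst (learn_alg R acts \<epsilon>)) \<epsilon>"
    unfolding eps_learns_def by (intro exI[of _ "- Max (U ` set acts)"]) simp
  moreover have "real (length acts) * real ?k \<le> real (length acts) * (2 * log 2 (1 / \<epsilon>))"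
    using iters_bounds(2)[OF \<open>0 < \<epsilon>\<close> \<open>\<epsilon> \<le> 1/2\<close>] by (intro mult_left_mono) auto
  ultimately show "eps_learns (set acts) U (fst (learn_alg R acts \<epsilon>)) \<epsilon> \<and>
      real (snd (learn_alg R acts \<epsilon>)) \<le> 2 * real (length acts) * log 2 (1 / \<epsilon>)"
    by (simp add: learn_alg_def learn_list_rounds)
qed

end
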